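(* Let $n\ge1$, identify $\mathbb{R}^{n+1}=\mathbb{R}^n\times\mathbb{R}$, let $R>0$, let $K\subset\mathbb{R}^{n+1}$ be the closed ball of radius $R$ centered at the origin, and let $f\colon\mathbb{R}^n\to(0,\infty)$ be continuous with $|x|^2+f(x)^2>R^2$ for all $x\in\mathbb{R}^n$ (so that $K$ is disjoint from the epigraph $L=\{(x,y)\mid f(x)\le y\}$). Then for every $x\in\mathbb{R}^n$ there is exactly one $y\in\mathbb{R}$ such that $d((x,y),K)=d((x,y),L)$.
   Context: $d(p,A)=\inf\{|p-q|\mid q\in A\}$ (Euclidean distance). *)

theory Defs
  imports "HOL-Analysis.Analysis"
begin

end

theory Submission
  imports Defs
begin

text \<open>
  On the vertical line through \<open>x\<close>, the distance to the epigraph \<open>L\<close> vanishes on \<open>L\<close> and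
  is at least \<open>-y\<close> at height \<open>y \<le> 0\<close>, since \<open>L\<close> lies above height \<open>0\<close>; the distance to the
  ball is \<open>max 0 (|(x, y)| - R)\<close>, which is at most \<open>-y\<close> far down. The intermediate value
  theorem gives an equidistant point, and it lies outside the ball because ball and \<open>L\<close> are
  disjoint. For two equidistant points \<open>p\<^sub>1\<close> below \<open>p\<^sub>2\<close>, the distance to \<open>L\<close> is antitone in
  the height (\<open>L\<close> is closed upwards), so \<open>|p\<^sub>2| \<le> |p\<^sub>1|\<close>. But comparing the squared
  distances of \<open>p\<^sub>1\<close> and \<open>p\<^sub>2\<close> to the point \<open>q\<close> of \<open>L\<close> nearest to \<open>p\<^sub>1\<close> gives
  \<open>R (|p\<^sub>2| - |p\<^sub>1|) \<ge> \<langle>p\<^sub>2 - p\<^sub>1, q\<rangle> > 0\<close>, as \<open>q\<close> has positive height.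
\<close>

lemma infdist_geI:
  assumes "A \<noteq> {}" "\<And>a. a \<in> A \<Longrightarrow> d \<le> dist x a"
  shows "d \<le> infdist x A"
  using assms by (simp add: infdist_notempty cINF_greatest)

lemma infdist_translate_le:
  fixes p a :: "'a::real_normed_vector"
  assumes "\<And>s. s \<in> S \<Longrightarrow> s + a \<in> S"
  shows "infdist (p + a) S \<le> infdist p S"
proof (cases "S = {}")
  case False
  have "infdist (p + a) S \<le> dist p s" if "s \<in> S" for s
    using infdist_le[OF assms[OF that], of "p + a"] by (simp add: dist_norm)
  with False show ?thesis by (intro infdist_geI)
qed (simp add: infdist_def)

lemma infdist_cball_0:
  fixes p :: "'a::real_normed_vector"
  assumes "0 \<le> R"
  shows "infdist p (cball 0 R) = max 0 (norm p - R)"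
proof (cases "norm p \<le> R")
  case False
  then have "norm p > 0" using assms by linarith
  define k where "k = (R / norm p) *\<^sub>R p"
  have "k \<in> cball 0 R" using \<open>norm p > 0\<close> assms by (simp add: k_def)
  moreover have "dist p k = norm p - R"
  proof -
    have "p - k = (1 - R / norm p) *\<^sub>R p" by (simp add: k_def algebra_simps)
    then show ?thesis using \<open>norm p > 0\<close> False
      by (simp add: dist_norm divide_le_eq_1 left_diff_distrib)
  qed
  ultimately have "infdist p (cball 0 R) \<le> norm p - R" by (metis infdist_le)
  moreover have "norm p - R \<le> infdist p (cball 0 R)"
    using assms
    by (intro infdist_geI) (auto simp: dist_norm intro: order_trans[OF _ norm_triangle_ineq2])
  ultimately show ?thesis using False by simp
qed simp

lemma infdist_eq_imp_notin:
  assumes "closed B" "B \<noteq> {}" "A \<inter> B = {}" "infdist p A = infdist p B"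
  shows "p \<notin> A"
  using assms in_closed_iff_infdist_zero by fastforce

lemma norm_less_if_inner_pos:
  fixes p1 p2 q :: "'a::real_inner"
  assumes "0 \<le> R" "R \<le> norm p2"
    and "dist p1 q = norm p1 - R" "norm p2 - R \<le> dist p2 q"
    and "0 < (p2 - p1) \<bullet> q"
  shows "norm p1 < norm p2"
proof -
  have sq: "(dist p q)\<^sup>2 = (norm p)\<^sup>2 - 2 * (p \<bullet> q) + (norm q)\<^sup>2" for p :: 'a
    by (simp add: dist_norm power2_norm_eq_inner inner_diff inner_commute)
  have "(norm p2 - R)\<^sup>2 \<le> (dist p2 q)\<^sup>2"
    using assms(2,4) by (intro power_mono) auto
  moreover have "(norm p1 - R)\<^sup>2 = (dist p1 q)\<^sup>2" using assms(3) by simp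
  ultimately have "R * (norm p2 - norm p1) \<ge> (p2 - p1) \<bullet> q"
    unfolding sq by (simp add: power2_eq_square algebra_simps)
  with assms(5) have "0 < R * (norm p2 - norm p1)" by linarith
  with assms(1) show ?thesis by (simp add: zero_less_mult_iff)
qed

lemma exists_equidistant_height:
  fixes x :: "'a::real_normed_vector" and L :: "('a \<times> real) set"
  assumes "0 < R"
    and nonneg: "\<And>u v. (u, v) \<in> L \<Longrightarrow> 0 \<le> v"
    and "(x, b) \<in> L"
  shows "\<exists>y. infdist (x, y) (cball 0 R) = infdist (x, y) L"
proof -
  define T where "T = (norm x)\<^sup>2 / (2 * R)"
  have "0 \<le> T" using \<open>0 < R\<close> by (simp add: T_def)
  have "(norm x)\<^sup>2 = 2 * T * R" using \<open>0 < R\<close> by (simp add: T_def)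
  then have "(norm (x, -T))\<^sup>2 \<le> (T + R)\<^sup>2"
    using \<open>0 \<le> T\<close> \<open>0 < R\<close> by (simp add: norm_Pair power2_sum)
  then have "norm (x, -T) \<le> T + R"
    by (rule power2_le_imp_le) (use \<open>0 \<le> T\<close> \<open>0 < R\<close> in auto)
  then have "infdist (x, -T) (cball 0 R) \<le> T"
    using \<open>0 < R\<close> \<open>0 \<le> T\<close> by (simp add: infdist_cball_0 del: norm_Pair)
  moreover have "T \<le> infdist (x, -T) L"
  proof (rule infdist_geI)
    show "L \<noteq> {}" using \<open>(x, b) \<in> L\<close> by blast
    fix q assume "q \<in> L"
    then have "0 \<le> snd q" using nonneg by (cases q) auto
    then have "T \<le> dist (-T) (snd q)" using \<open>0 \<le> T\<close> by (simp add: dist_real_def)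
    also have "\<dots> \<le> dist (x, -T) q" using dist_snd_le[of "(x, -T)" q] by simp
    finally show "T \<le> dist (x, -T) q" .
  qed
  moreover have "infdist (x, b) L \<le> infdist (x, b) (cball 0 R)"
    using \<open>(x, b) \<in> L\<close> by (simp add: infdist_nonneg)
  moreover have "-T \<le> b" using nonneg[OF \<open>(x, b) \<in> L\<close>] \<open>0 \<le> T\<close> by simp
  moreover have "continuous_on {-T..b} (\<lambda>y. infdist (x, y) (cball 0 R) - infdist (x, y) L)"
    by (intro continuous_intros)
  ultimately obtain y where "infdist (x, y) (cball 0 R) - infdist (x, y) L = 0"
    using IVT'[of "\<lambda>y. infdist (x, y) (cball 0 R) - infdist (x, y) L" "-T" 0 b] by auto
  then show ?thesis by auto
qed

lemma equidistant_height_unique: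
  fixes x :: "'a::euclidean_space" and L :: "('a \<times> real) set"
  assumes "0 < R" "closed L" "L \<noteq> {}" "cball 0 R \<inter> L = {}"
    and upward: "\<And>u v t. (u, v) \<in> L \<Longrightarrow> 0 \<le> t \<Longrightarrow> (u, v + t) \<in> L"
    and pos: "\<And>u v. (u, v) \<in> L \<Longrightarrow> 0 < v"
    and "infdist (x, y1) (cball 0 R) = infdist (x, y1) L"
    and "infdist (x, y2) (cball 0 R) = infdist (x, y2) L"
  shows "y1 = y2"
proof -
  have outside: "R < norm (x, y) \<and> infdist (x, y) L = norm (x, y) - R"
    if "infdist (x, y) (cball 0 R) = infdist (x, y) L" for y
  proof -
    have "(x, y) \<notin> cball 0 R"
      using infdist_eq_imp_notin[OF \<open>closed L\<close> \<open>L \<noteq> {}\<close> \<open>cball 0 R \<inter> L = {}\<close> that] .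
    then show ?thesis using that \<open>0 < R\<close> by (simp add: infdist_cball_0)
  qed
  have False if eq1: "infdist (x, y1) (cball 0 R) = infdist (x, y1) L"
    and eq2: "infdist (x, y2) (cball 0 R) = infdist (x, y2) L" and "y1 < y2" for y1 y2
  proof -
    obtain u v where "(u, v) \<in> L" and near: "infdist (x, y1) L = dist (x, y1) (u, v)"
      using infdist_attains_inf[OF \<open>closed L\<close> \<open>L \<noteq> {}\<close>] by (metis surj_pair)
    have "infdist ((x, y1) + (0, y2 - y1)) L \<le> infdist (x, y1) L"
      using upward \<open>y1 < y2\<close> by (intro infdist_translate_le) auto
    then have "norm (x, y2) \<le> norm (x, y1)"
      using outside[OF eq1] outside[OF eq2] by simp
    moreover have "norm (x, y1) < norm (x, y2)"
    proof (rule norm_less_if_inner_pos)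
      show "norm (x, y2) - R \<le> dist (x, y2) (u, v)"
        using outside[OF eq2] infdist_le[OF \<open>(u, v) \<in> L\<close>] by metis
      show "0 < ((x, y2) - (x, y1)) \<bullet> (u, v)"
        using pos[OF \<open>(u, v) \<in> L\<close>] \<open>y1 < y2\<close> by (simp add: inner_Pair)
    qed (use outside[OF eq1] outside[OF eq2] near \<open>0 < R\<close> in auto)
    ultimately show False by simp
  qed
  then show ?thesis using assms(7,8) by (cases y1 y2 rule: linorder_cases) blast+
qed

theorem lemma2:
  fixes f :: "real ^ 'n \<Rightarrow> real" and R :: real
  assumes "R > 0"
    and "continuous_on UNIV f"
    and "\<And>x. f x > 0"
    and "\<And>x. norm x ^ 2 + (f x) ^ 2 > R ^ 2"
  shows "\<forall>x :: real ^ 'n. \<exists>!y :: real.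
           infdist (x, y) (cball (0 :: (real ^ 'n) \<times> real) R)
             = infdist (x, y) {(u, v). f u \<le> v}"
proof
  fix x :: "real ^ 'n"
  let ?L = "{(u, v). f u \<le> v}"
  have "closed {p. f (fst p) \<le> snd p}"
    by (intro closed_Collect_le continuous_intros continuous_on_compose2[OF assms(2)]) auto
  then have "closed ?L" by (simp add: case_prod_beta')
  have above: "0 < v" if "(u, v) \<in> ?L" for u v
    using assms(3)[of u] that by simp
  have "cball 0 R \<inter> ?L = {}"
  proof safe
    fix u v assume "(u, v) \<in> cball 0 R" "f u \<le> v"
    then have "(norm u)\<^sup>2 + v\<^sup>2 \<le> R\<^sup>2"
      using \<open>R > 0\<close> by (simp add: norm_Pair sqrt_le_D)
    moreover have "(f u)\<^sup>2 \<le> v\<^sup>2" using \<open>f u \<le> v\<close> assms(3)[of u] by (simp add: power_mono)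
    ultimately show "(u, v) \<in> {}" using assms(4)[of u] by simp
  qed
  show "\<exists>!y. infdist (x, y) (cball 0 R) = infdist (x, y) ?L"
  proof (rule ex_ex1I)
    show "\<exists>y. infdist (x, y) (cball 0 R) = infdist (x, y) ?L"
      using \<open>R > 0\<close> above less_imp_le by (intro exists_equidistant_height[of R _ x "f x"]) auto
    show "y1 = y2" if "infdist (x, y1) (cball 0 R) = infdist (x, y1) ?L"
      and "infdist (x, y2) (cball 0 R) = infdist (x, y2) ?L" for y1 y2
      using \<open>R > 0\<close> \<open>closed ?L\<close> \<open>cball 0 R \<inter> ?L = {}\<close> above that
      by (intro equidistant_height_unique[of R ?L x y1 y2]) auto
  qed
qed

end
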